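(* Let $F$ be an Archimedean vector lattice endowed with a sturdy locally solid additive convergence $\eta$. Then every regular sublattice $E$ of $F$ is order dense in its $\eta$-closure $\overline{E}$, and $\overline{E}$ is a regular sublattice of $F$.
   Context: A convergence on a vector lattice is locally solid additive if addition and $f\mapsto -f$ are continuous and $|e_\alpha|\le|f_\alpha|$, $f_\alpha\to0$ imply $e_\alpha\to0$. For a convergence, the adherence $\overline{A}^1$ of $A$ is the set of limits of convergent nets in $A$; $A$ is closed if $\overline A^1=A$; the closure $\overline A$ is the intersection of all closed sets containing $A$. Order convergence: a net converges to $f$ if there is a set $G$ with $\bigwedge G=0$ such that for each $g\in G$ the net is eventually in $[f-g,f+g]$; $\overline{E}_o$ is the closure for order convergence. A sublattice $E$ is regular if $\bigwedge_E G=0$ implies $\bigwedge_F G=0$ for all $G\subset E$; it is order dense in $H\supset E$ if every $h>0$ in $H$ dominates some $e\in E$ with $e>0$. $\eta$ is sturdy if $\overline{E}^{1}_{\eta}\subset\overline{E}_{o}$ for every regular sublattice $E$ of $F$. *)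

theory Defs
  imports Main "HOL.Real_Vector_Spaces"
begin

definition vabs :: "'a::{ordered_real_vector,lattice} \<Rightarrow> 'a" where
  "vabs x = sup x (- x)"

definition archimedean_vl :: "'a::{ordered_real_vector,lattice} itself \<Rightarrow> bool" where
  "archimedean_vl _ \<longleftrightarrow>
     (\<forall>x y::'a. 0 \<le> x \<and> (\<forall>n::nat. of_nat n *\<^sub>R x \<le> y) \<longrightarrow> x = 0)"

definition is_inf_in :: "'a::order set \<Rightarrow> 'a set \<Rightarrow> 'a \<Rightarrow> bool" where
  "is_inf_in S G x \<longleftrightarrow> x \<in> S \<and> (\<forall>g\<in>G. x \<le> g) \<and> (\<forall>y\<in>S. (\<forall>g\<in>G. y \<le> g) \<longrightarrow> y \<le> x)"

definition sublattice :: "'a::{ordered_real_vector,lattice} set \<Rightarrow> bool" where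
  "sublattice E \<longleftrightarrow> 0 \<in> E \<and> (\<forall>x\<in>E. \<forall>y\<in>E. x + y \<in> E) \<and> (\<forall>c. \<forall>x\<in>E. c *\<^sub>R x \<in> E)
     \<and> (\<forall>x\<in>E. \<forall>y\<in>E. sup x y \<in> E \<and> inf x y \<in> E)"

definition regular_sublattice :: "'a::{ordered_real_vector,lattice} set \<Rightarrow> bool" where
  "regular_sublattice E \<longleftrightarrow> sublattice E \<and>
     (\<forall>G. G \<subseteq> E \<longrightarrow> is_inf_in E G 0 \<longrightarrow> is_inf_in UNIV G 0)"

definition order_dense_in :: "'a::{ordered_real_vector,lattice} set \<Rightarrow> 'a set \<Rightarrow> bool" where
  "order_dense_in E H \<longleftrightarrow> (\<forall>h\<in>H. 0 < h \<longrightarrow> (\<exists>e\<in>E. 0 < e \<and> e \<le> h))"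

text \<open>Convergences are represented via tail filters of nets: eta F x means that
  (any net with tail filter) F converges to x.\<close>
definition convergence :: "('a filter \<Rightarrow> 'a \<Rightarrow> bool) \<Rightarrow> bool" where
  "convergence eta \<longleftrightarrow> (\<forall>x. eta (principal {x}) x)
     \<and> (\<forall>F G x. eta F x \<and> G \<le> F \<longrightarrow> eta G x)
     \<and> (\<forall>F G x. eta F x \<and> eta G x \<longrightarrow> eta (sup F G) x)"

text \<open>Nets (e_a, f_a) over a common index set are represented by filters on pairs.\<close>
definition locally_solid_additive :: "('a::{ordered_real_vector,lattice} filter \<Rightarrow> 'a \<Rightarrow> bool) \<Rightarrow> bool" where
  "locally_solid_additive eta \<longleftrightarrow> convergence eta
     \<and> (\<forall>(H::('a \<times> 'a) filter) f g. H \<noteq> bot \<and> eta (filtermap fst H) f \<and> eta (filtermap snd H) g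
          \<longrightarrow> eta (filtermap (\<lambda>(x, y). x + y) H) (f + g))
     \<and> (\<forall>F f. F \<noteq> bot \<and> eta F f \<longrightarrow> eta (filtermap uminus F) (- f))
     \<and> (\<forall>H::('a \<times> 'a) filter. H \<noteq> bot \<and> eventually (\<lambda>(e, f). vabs e \<le> vabs f) H
          \<and> eta (filtermap snd H) 0 \<longrightarrow> eta (filtermap fst H) 0)"

definition adherence :: "('a filter \<Rightarrow> 'a \<Rightarrow> bool) \<Rightarrow> 'a set \<Rightarrow> 'a set" where
  "adherence eta A = {x. \<exists>F. F \<noteq> bot \<and> eventually (\<lambda>y. y \<in> A) F \<and> eta F x}"

definition conv_closed :: "('a filter \<Rightarrow> 'a \<Rightarrow> bool) \<Rightarrow> 'a set \<Rightarrow> bool" where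
  "conv_closed eta A \<longleftrightarrow> adherence eta A = A"

definition conv_closure :: "('a filter \<Rightarrow> 'a \<Rightarrow> bool) \<Rightarrow> 'a set \<Rightarrow> 'a set" where
  "conv_closure eta A = \<Inter>{C. conv_closed eta C \<and> A \<subseteq> C}"

definition order_conv :: "'a::{ordered_real_vector,lattice} filter \<Rightarrow> 'a \<Rightarrow> bool" where
  "order_conv F f \<longleftrightarrow> (\<exists>G. is_inf_in UNIV G 0 \<and>
     (\<forall>g\<in>G. eventually (\<lambda>x. f - g \<le> x \<and> x \<le> f + g) F))"

definition sturdy :: "('a::{ordered_real_vector,lattice} filter \<Rightarrow> 'a \<Rightarrow> bool) \<Rightarrow> bool" where
  "sturdy eta \<longleftrightarrow> (\<forall>E. regular_sublattice E \<longrightarrow> adherence eta E \<subseteq> conv_closure order_conv E)"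

end

theory Submission
  imports Defs "HOL-Library.Lattice_Algebras"
begin

text \<open>Call \<open>x\<close> approximable by \<open>E\<close> if, for every \<open>a \<in> E\<close>, \<open>x \<squnion> a\<close> is the supremum of the elements
  of \<open>E\<close> below it and \<open>x \<sqinter> a\<close> the infimum of the elements of \<open>E\<close> above it. When \<open>E\<close> is a regular
  sublattice of an Archimedean \<open>F\<close>, the approximable elements form an order closed set containing \<open>E\<close>,
  in which \<open>E\<close> is order dense, and every sublattice lying between \<open>E\<close> and the approximable elements
  is again regular. This applies to the order closure of \<open>E\<close>, which is therefore regular; sturdiness
  then makes it \<open>\<eta>\<close>-closed, so the \<open>\<eta>\<close>-closure of \<open>E\<close> (a sublattice, since the lattice operations
  are \<open>\<eta>\<close>-continuous) lies between \<open>E\<close> and the approximable elements as well.\<close>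

interpretation vl: lattice_ab_group_add_abs vabs "(+)" "0::'a::{ordered_real_vector,lattice}"
    "(-)" uminus "(\<le>)" "(<)" inf sup
  unfolding class.lattice_ab_group_add_abs_def class.lattice_ab_group_add_def
    class.lattice_ab_group_add_abs_axioms_def
  by (intro conjI allI ordered_ab_group_add_class.ordered_ab_group_add_axioms
      lattice_class.lattice_axioms) (simp add: vabs_def)

section \<open>Lipschitz maps\<close>

definition vabs_lipschitz :: "real \<Rightarrow> ('a::{ordered_real_vector,lattice} \<Rightarrow> 'a) \<Rightarrow> bool" where
  "vabs_lipschitz k f \<longleftrightarrow> (\<forall>x y. vabs (f y - f x) \<le> k *\<^sub>R vabs (y - x))"

lemma vabs_lipschitzI:
  assumes "\<And>x y. f y \<le> f x + k *\<^sub>R vabs (y - x)"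
  shows "vabs_lipschitz k f"
  unfolding vabs_lipschitz_def
proof (intro allI vl.abs_leI)
  fix x y
  show "f y - f x \<le> k *\<^sub>R vabs (y - x)"
    using assms[where x=x and y=y] by (simp add: diff_le_eq add.commute)
  show "- (f y - f x) \<le> k *\<^sub>R vabs (y - x)"
    using assms[where x=y and y=x] by (simp add: vl.abs_minus_commute diff_le_eq add.commute)
qed

lemma vabs_diff_le_iff: "vabs (y - x) \<le> g \<longleftrightarrow> x - g \<le> y \<and> y \<le> x + g"
  by (auto simp: vl.abs_le_iff algebra_simps)

lemma vabs_lipschitz_add_const: "vabs_lipschitz 1 (\<lambda>y. y + c)"
proof (rule vabs_lipschitzI)
  fix x y :: 'a
  show "y + c \<le> x + c + 1 *\<^sub>R vabs (y - x)"
    using vl.abs_ge_self[of "y - x"] by (simp add: diff_le_eq add.commute)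
qed

lemma vabs_lipschitz_uminus: "vabs_lipschitz 1 uminus"
proof (rule vabs_lipschitzI)
  fix x y :: 'a
  show "- y \<le> - x + 1 *\<^sub>R vabs (y - x)"
    using vl.abs_ge_minus_self[of "y - x"] by (simp add: le_diff_eq diff_le_eq add.commute)
qed

lemma vabs_lipschitz_sup_const: "vabs_lipschitz 1 (\<lambda>y. sup y c)"
proof (rule vabs_lipschitzI)
  fix x y :: 'a
  let ?d = "vabs (y - x)"
  have "sup y c \<le> sup (x + ?d) (c + ?d)"
    using vl.abs_ge_self[of "y - x"] by (intro sup_mono) (simp_all add: algebra_simps)
  also have "\<dots> = sup x c + ?d" by (rule vl.add_sup_distrib_right[symmetric])
  finally show "sup y c \<le> sup x c + 1 *\<^sub>R ?d" by simp
qed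

lemma vabs_lipschitz_inf_const: "vabs_lipschitz 1 (\<lambda>y. inf y c)"
proof (rule vabs_lipschitzI)
  fix x y :: 'a
  let ?d = "vabs (y - x)"
  have "inf y c \<le> inf (x + ?d) (c + ?d)"
    using vl.abs_ge_self[of "y - x"] by (intro inf_mono) (simp_all add: algebra_simps)
  also have "\<dots> = inf x c + ?d" by (rule vl.add_inf_distrib_right[symmetric])
  finally show "inf y c \<le> inf x c + 1 *\<^sub>R ?d" by simp
qed

lemma scaleR_le_abs_scaleR_vabs: "r *\<^sub>R y \<le> \<bar>r\<bar> *\<^sub>R vabs y"
proof (cases "0 \<le> r")
  case True
  then show ?thesis by (simp add: scaleR_left_mono vl.abs_ge_self)
next
  case False
  then have "(- r) *\<^sub>R (- y) \<le> (- r) *\<^sub>R vabs y"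
    by (intro scaleR_left_mono) (auto simp: vl.abs_ge_minus_self)
  then show ?thesis using False by simp
qed

lemma vabs_lipschitz_scaleR: "vabs_lipschitz \<bar>r\<bar> (\<lambda>y. r *\<^sub>R y)"
proof (rule vabs_lipschitzI)
  fix x y :: 'a
  show "r *\<^sub>R y \<le> r *\<^sub>R x + \<bar>r\<bar> *\<^sub>R vabs (y - x)"
    using scaleR_le_abs_scaleR_vabs[of r "y - x"] by (simp add: scaleR_diff_right diff_le_eq add.commute)
qed

section \<open>Convergences under which Lipschitz maps are continuous\<close>

definition lipschitz_continuous_conv ::
    "('a::{ordered_real_vector,lattice} filter \<Rightarrow> 'a \<Rightarrow> bool) \<Rightarrow> bool" where
  "lipschitz_continuous_conv eta \<longleftrightarrow> (\<forall>x. eta (principal {x}) x) \<and>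
     (\<forall>k f F x. vabs_lipschitz k f \<and> F \<noteq> bot \<and> eta F x \<longrightarrow> eta (filtermap f F) (f x))"

lemma is_inf_in_UNIV_le:
  assumes "is_inf_in UNIV G (0::'a::{order,zero})" and "\<And>g. g \<in> G \<Longrightarrow> t \<le> g"
  shows "t \<le> 0"
  using assms unfolding is_inf_in_def by blast

lemma is_inf_in_UNIV_scaleR:
  fixes G :: "'a::ordered_real_vector set"
  assumes G: "is_inf_in UNIV G 0" and c: "0 < c"
  shows "is_inf_in UNIV ((\<lambda>g. c *\<^sub>R g) ` G) 0"
  unfolding is_inf_in_def
proof (intro conjI ballI allI impI)
  show "0 \<le> g'" if "g' \<in> (\<lambda>g. c *\<^sub>R g) ` G" for g'
    using that G c unfolding is_inf_in_def by (auto intro: scaleR_nonneg_nonneg)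
  fix z :: 'a
  assume z: "\<forall>g'\<in>(\<lambda>g. c *\<^sub>R g) ` G. z \<le> g'"
  have "(1 / c) *\<^sub>R z \<le> 0"
  proof (rule is_inf_in_UNIV_le[OF G])
    fix g assume "g \<in> G"
    then have "c *\<^sub>R ((1 / c) *\<^sub>R z) \<le> c *\<^sub>R g" using z c by simp
    then show "(1 / c) *\<^sub>R z \<le> g" using c by (simp only: scaleR_le_cancel_left_pos)
  qed
  then show "z \<le> 0" using c by (simp add: scaleR_le_0_iff)
qed simp

lemma order_conv_principal: "order_conv (principal {x}) x"
  unfolding order_conv_def
  by (rule exI[of _ "{0}"]) (auto simp: is_inf_in_def eventually_principal)

lemma order_conv_vabs_lipschitz:
  assumes f: "vabs_lipschitz k f" and conv: "order_conv F x"
  shows "order_conv (filtermap f F) (f x)"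
proof -
  obtain G where G: "is_inf_in UNIV G 0"
    and ev: "\<And>g. g \<in> G \<Longrightarrow> eventually (\<lambda>y. vabs (y - x) \<le> g) F"
    using conv unfolding order_conv_def vabs_diff_le_iff by blast
  define c where "c = \<bar>k\<bar> + 1"
  have c: "0 < c" unfolding c_def by simp
  have "eventually (\<lambda>y. vabs (y - f x) \<le> c *\<^sub>R g) (filtermap f F)" if g: "g \<in> G" for g
  proof -
    have "vabs (f y - f x) \<le> c *\<^sub>R g" if y: "vabs (y - x) \<le> g" for y
    proof -
      have "vabs (f y - f x) \<le> k *\<^sub>R vabs (y - x)" using f by (simp add: vabs_lipschitz_def)
      also have "\<dots> \<le> c *\<^sub>R vabs (y - x)"
        unfolding c_def by (rule scaleR_right_mono) (auto simp: vl.abs_ge_zero)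
      also have "\<dots> \<le> c *\<^sub>R g" using y c by (intro scaleR_left_mono) auto
      finally show ?thesis .
    qed
    then show ?thesis using ev[OF g] by (auto simp: eventually_filtermap elim: eventually_mono)
  qed
  then show ?thesis
    using is_inf_in_UNIV_scaleR[OF G c] unfolding order_conv_def vabs_diff_le_iff by blast
qed

lemma lipschitz_continuous_order_conv: "lipschitz_continuous_conv order_conv"
  unfolding lipschitz_continuous_conv_def
  using order_conv_principal order_conv_vabs_lipschitz by blast

lemma locally_solid_additive_principal:
  "locally_solid_additive eta \<Longrightarrow> eta (principal {x}) x"
  unfolding locally_solid_additive_def convergence_def by blast

lemma locally_solid_additive_const:
  assumes "locally_solid_additive eta"
  shows "eta (filtermap (\<lambda>_. c) F) c"
proof -
  have "filtermap (\<lambda>_. c) F \<le> principal {c}" by (simp add: le_principal eventually_filtermap)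
  then show ?thesis
    using assms locally_solid_additive_principal
    unfolding locally_solid_additive_def convergence_def by blast
qed

lemma locally_solid_additive_add:
  assumes L: "locally_solid_additive eta" and F: "F \<noteq> bot"
    and a: "eta (filtermap a F) p" and b: "eta (filtermap b F) q"
  shows "eta (filtermap (\<lambda>y. a y + b y) F) (p + q)"
proof -
  let ?H = "filtermap (\<lambda>y. (a y, b y)) F"
  have "?H \<noteq> bot" using F by (simp add: filtermap_bot_iff)
  moreover have "eta (filtermap fst ?H) p" "eta (filtermap snd ?H) q"
    using a b by (simp_all add: filtermap_filtermap)
  ultimately have "eta (filtermap (\<lambda>(x, y). x + y) ?H) (p + q)"
    using L unfolding locally_solid_additive_def by blast
  then show ?thesis by (simp add: filtermap_filtermap)
qed

lemma locally_solid_additive_solid: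
  assumes L: "locally_solid_additive eta" and F: "F \<noteq> bot"
    and le: "\<And>y. vabs (a y) \<le> vabs (b y)" and b: "eta (filtermap b F) 0"
  shows "eta (filtermap a F) 0"
proof -
  let ?H = "filtermap (\<lambda>y. (a y, b y)) F"
  have "?H \<noteq> bot" using F by (simp add: filtermap_bot_iff)
  moreover have "eventually (\<lambda>(e, f). vabs e \<le> vabs f) ?H"
    by (simp add: eventually_filtermap le)
  moreover have "eta (filtermap snd ?H) 0" using b by (simp add: filtermap_filtermap)
  ultimately have "eta (filtermap fst ?H) 0"
    using L unfolding locally_solid_additive_def by blast
  then show ?thesis by (simp add: filtermap_filtermap)
qed

lemma locally_solid_additive_translate:
  assumes L: "locally_solid_additive eta" and F: "F \<noteq> bot" and conv: "eta F x"
  shows "eta (filtermap (\<lambda>y. y + c) F) (x + c)"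
  using locally_solid_additive_add[OF L F _ locally_solid_additive_const[OF L], of "\<lambda>y. y" x c] conv
  by simp

text \<open>The deviation \<open>f y - f x\<close> is dominated by \<open>n \<bar>y - x\<bar>\<close> for a natural \<open>n \<ge> k\<close>, and \<open>n \<bar>y - x\<bar>\<close>
  tends to \<open>0\<close> as an \<open>n\<close>-fold sum of nets tending to \<open>0\<close>.\<close>

lemma locally_solid_additive_vabs_lipschitz:
  assumes L: "locally_solid_additive eta" and f: "vabs_lipschitz k f"
    and F: "F \<noteq> bot" and conv: "eta F x"
  shows "eta (filtermap f F) (f x)"
proof -
  have "eta (filtermap (\<lambda>y. y - x) F) 0"
    using locally_solid_additive_translate[OF L F conv, of "- x"] by simp
  then have dist: "eta (filtermap (\<lambda>y. vabs (y - x)) F) 0"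
    by (rule locally_solid_additive_solid[OF L F, rotated]) (simp add: vl.abs_idempotent)
  have multiple: "eta (filtermap (\<lambda>y. real n *\<^sub>R vabs (y - x)) F) 0" for n
  proof (induction n)
    case 0
    then show ?case using locally_solid_additive_const[OF L] by simp
  next
    case (Suc n)
    then show ?case
      using locally_solid_additive_add[OF L F Suc dist] by (simp add: scaleR_left_distrib add.commute)
  qed
  obtain n :: nat where n: "k \<le> real n" using real_arch_simple by blast
  have "eta (filtermap (\<lambda>y. f y - f x) F) 0"
  proof (rule locally_solid_additive_solid[OF L F _ multiple[of n]])
    fix y
    have "vabs (f y - f x) \<le> k *\<^sub>R vabs (y - x)" using f by (simp add: vabs_lipschitz_def)
    also have "\<dots> \<le> real n *\<^sub>R vabs (y - x)" using n by (rule scaleR_right_mono) (rule vl.abs_ge_zero)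
    also have "\<dots> = vabs (real n *\<^sub>R vabs (y - x))"
      by (intro vl.abs_of_nonneg[symmetric] scaleR_nonneg_nonneg) (simp_all add: vl.abs_ge_zero)
    finally show "vabs (f y - f x) \<le> vabs (real n *\<^sub>R vabs (y - x))" .
  qed
  from locally_solid_additive_translate[OF L _ this, of "f x"] F
  show ?thesis by (simp add: filtermap_filtermap filtermap_bot_iff)
qed

lemma lipschitz_continuous_conv_if_locally_solid_additive:
  "locally_solid_additive eta \<Longrightarrow> lipschitz_continuous_conv eta"
  unfolding lipschitz_continuous_conv_def
  using locally_solid_additive_principal locally_solid_additive_vabs_lipschitz by blast

section \<open>Closures\<close>

lemma adherence_mono: "A \<subseteq> B \<Longrightarrow> adherence eta A \<subseteq> adherence eta B"
  unfolding adherence_def using eventually_mono[of "\<lambda>y. y \<in> A" _ "\<lambda>y. y \<in> B"] by blast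

lemma adherence_image_subset:
  assumes "\<And>F x. F \<noteq> bot \<Longrightarrow> eta F x \<Longrightarrow> eta (filtermap f F) (f x)"
  shows "f ` adherence eta A \<subseteq> adherence eta (f ` A)"
proof
  fix y assume "y \<in> f ` adherence eta A"
  then obtain x F where y: "y = f x" and F: "F \<noteq> bot" "eventually (\<lambda>z. z \<in> A) F" "eta F x"
    unfolding adherence_def by blast
  have "filtermap f F \<noteq> bot" using F(1) by (simp add: filtermap_bot_iff)
  moreover have "eventually (\<lambda>z. z \<in> f ` A) (filtermap f F)"
    using F(2) by (auto simp: eventually_filtermap elim: eventually_mono)
  ultimately show "y \<in> adherence eta (f ` A)"
    using assms F y unfolding adherence_def by blast
qed

lemma subset_adherence: "(\<And>x. eta (principal {x}) x) \<Longrightarrow> A \<subseteq> adherence eta A"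
  unfolding adherence_def
  by (auto intro!: exI[of _ "principal {x}" for x] simp: eventually_principal principal_eq_bot_iff)

lemma conv_closedI: "(\<And>x. eta (principal {x}) x) \<Longrightarrow> adherence eta A \<subseteq> A \<Longrightarrow> conv_closed eta A"
  unfolding conv_closed_def using subset_adherence by blast

lemma subset_conv_closure: "A \<subseteq> conv_closure eta A"
  unfolding conv_closure_def by auto

lemma conv_closure_minimal: "conv_closed eta C \<Longrightarrow> A \<subseteq> C \<Longrightarrow> conv_closure eta A \<subseteq> C"
  unfolding conv_closure_def by auto

lemma conv_closed_conv_closure:
  assumes "\<And>x. eta (principal {x}) x"
  shows "conv_closed eta (conv_closure eta A)"
proof (rule conv_closedI[where eta=eta, OF assms])
  have "adherence eta (conv_closure eta A) \<subseteq> C" if "conv_closed eta C" "A \<subseteq> C" for C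
    using adherence_mono[OF conv_closure_minimal[OF that]] that(1) unfolding conv_closed_def by blast
  then show "adherence eta (conv_closure eta A) \<subseteq> conv_closure eta A"
    unfolding conv_closure_def by blast
qed

lemma conv_closure_image_subset:
  assumes P: "\<And>x. eta (principal {x}) x"
    and cont: "\<And>F x. F \<noteq> bot \<Longrightarrow> eta F x \<Longrightarrow> eta (filtermap f F) (f x)"
    and A: "f ` A \<subseteq> conv_closure eta A"
  shows "f ` conv_closure eta A \<subseteq> conv_closure eta A"
proof -
  let ?K = "conv_closure eta A"
  have "f ` adherence eta (f -` ?K) \<subseteq> adherence eta ?K"
    using adherence_image_subset[where eta=eta and f=f, OF cont] adherence_mono[of "f ` (f -` ?K)" ?K] by blast
  also have "\<dots> = ?K" using conv_closed_conv_closure[where eta=eta, OF P] unfolding conv_closed_def .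
  finally have "conv_closed eta (f -` ?K)" by (intro conv_closedI[where eta=eta, OF P]) blast
  then have "?K \<subseteq> f -` ?K"
    by (rule conv_closure_minimal) (use A in \<open>simp add: image_subset_iff_subset_vimage\<close>)
  then show ?thesis by blast
qed

lemma conv_closure_closed_lipschitz_binop:
  assumes eta: "lipschitz_continuous_conv eta"
    and lip: "\<And>c. vabs_lipschitz 1 (\<lambda>y. f y c)" and comm: "\<And>x y. f x y = f y x"
    and A: "\<And>x y. x \<in> A \<Longrightarrow> y \<in> A \<Longrightarrow> f x y \<in> A"
    and x: "x \<in> conv_closure eta A" and y: "y \<in> conv_closure eta A"
  shows "f x y \<in> conv_closure eta A"
proof -
  let ?K = "conv_closure eta A"
  have P: "\<And>x. eta (principal {x}) x"
    and cont: "\<And>c F x. F \<noteq> bot \<Longrightarrow> eta F x \<Longrightarrow> eta (filtermap (\<lambda>y. f y c) F) (f x c)"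
    using eta lip unfolding lipschitz_continuous_conv_def by blast+
  have right: "(\<lambda>y. f y c) ` ?K \<subseteq> ?K" if "(\<lambda>y. f y c) ` A \<subseteq> ?K" for c
    using conv_closure_image_subset[where eta=eta, OF P cont that] .
  have "f a c \<in> ?K" if "a \<in> ?K" "c \<in> A" for a c
  proof -
    have "(\<lambda>y. f y c) ` A \<subseteq> ?K" using A[OF _ \<open>c \<in> A\<close>] subset_conv_closure[of A eta] by blast
    then show ?thesis using right \<open>a \<in> ?K\<close> by blast
  qed
  then have "(\<lambda>y. f y c) ` A \<subseteq> ?K" if "c \<in> ?K" for c
    using that by (auto simp: comm[of _ c])
  then show ?thesis using right x y by blast
qed

lemma sublattice_conv_closure:
  assumes eta: "lipschitz_continuous_conv eta" and E: "sublattice E"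
  shows "sublattice (conv_closure eta E)"
proof -
  let ?K = "conv_closure eta E"
  have P: "\<And>x. eta (principal {x}) x"
    and cont: "\<And>k f F x. vabs_lipschitz k f \<Longrightarrow> F \<noteq> bot \<Longrightarrow> eta F x \<Longrightarrow> eta (filtermap f F) (f x)"
    using eta unfolding lipschitz_continuous_conv_def by blast+
  have scale: "(\<lambda>y. r *\<^sub>R y) ` ?K \<subseteq> ?K" for r
  proof (rule conv_closure_image_subset[where eta=eta, OF P])
    show "eta (filtermap (\<lambda>y. r *\<^sub>R y) F) (r *\<^sub>R x)" if "F \<noteq> bot" "eta F x" for F x
      using cont[OF vabs_lipschitz_scaleR that] .
    show "(\<lambda>y. r *\<^sub>R y) ` E \<subseteq> ?K"
      using E subset_conv_closure[of E eta] unfolding sublattice_def by blast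
  qed
  moreover have "x + y \<in> ?K" if "x \<in> ?K" "y \<in> ?K" for x y
    using conv_closure_closed_lipschitz_binop[OF eta vabs_lipschitz_add_const add.commute _ that] E
    unfolding sublattice_def by blast
  moreover have "sup x y \<in> ?K" if "x \<in> ?K" "y \<in> ?K" for x y
    using conv_closure_closed_lipschitz_binop[OF eta vabs_lipschitz_sup_const sup.commute _ that] E
    unfolding sublattice_def by blast
  moreover have "inf x y \<in> ?K" if "x \<in> ?K" "y \<in> ?K" for x y
    using conv_closure_closed_lipschitz_binop[OF eta vabs_lipschitz_inf_const inf.commute _ that] E
    unfolding sublattice_def by blast
  moreover have "0 \<in> ?K" using E subset_conv_closure[of E eta] unfolding sublattice_def by blast
  ultimately show ?thesis using scale unfolding sublattice_def image_subset_iff by simp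
qed

section \<open>Regular sublattices of Archimedean vector lattices\<close>

lemma
  assumes "sublattice E"
  shows sublattice_zero: "0 \<in> E"
    and sublattice_add: "x \<in> E \<Longrightarrow> y \<in> E \<Longrightarrow> x + y \<in> E"
    and sublattice_sup: "x \<in> E \<Longrightarrow> y \<in> E \<Longrightarrow> sup x y \<in> E"
    and sublattice_inf: "x \<in> E \<Longrightarrow> y \<in> E \<Longrightarrow> inf x y \<in> E"
    and sublattice_scaleR: "x \<in> E \<Longrightarrow> c *\<^sub>R x \<in> E"
  using assms unfolding sublattice_def by auto

lemma sublattice_uminus: "sublattice E \<Longrightarrow> x \<in> E \<Longrightarrow> - x \<in> E"
  using sublattice_scaleR[of E x "- 1"] by simp

lemma sublattice_diff: "sublattice E \<Longrightarrow> x \<in> E \<Longrightarrow> y \<in> E \<Longrightarrow> x - y \<in> E"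
  using sublattice_add[of E x "- y"] sublattice_uminus[of E y] by simp

text \<open>If \<open>w \<ge> 0\<close> lies below every difference \<open>f - p\<close>, then each \<open>p\<^sub>0 + n w\<close> is again a lower bound of \<open>\<Phi>\<close>, so
  \<open>n w \<le> \<phi>\<^sub>0 - p\<^sub>0\<close> for all \<open>n\<close>.\<close>

lemma archimedean_is_inf_in_gaps_to_lower_bounds:
  fixes E :: "'a::{ordered_real_vector,lattice} set"
  assumes arch: "archimedean_vl TYPE('a)" and S: "sublattice E"
    and Phi: "Phi \<subseteq> E" "phi0 \<in> Phi" and p0: "p0 \<in> E" "\<forall>f\<in>Phi. p0 \<le> f"
  shows "is_inf_in E {f - p | f p. f \<in> Phi \<and> p \<in> E \<and> (\<forall>f'\<in>Phi. p \<le> f')} 0"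
proof -
  let ?D = "{f - p | f p. f \<in> Phi \<and> p \<in> E \<and> (\<forall>f'\<in>Phi. p \<le> f')}"
  have "z \<le> 0" if z: "z \<in> E" "\<forall>d\<in>?D. z \<le> d" for z
  proof -
    define w where "w = sup z 0"
    have w: "w \<in> E" "0 \<le> w" "\<forall>d\<in>?D. w \<le> d"
      using z sublattice_sup[OF S] sublattice_zero[OF S] unfolding w_def by auto
    have lower: "p0 + real n *\<^sub>R w \<in> E \<and> (\<forall>f\<in>Phi. p0 + real n *\<^sub>R w \<le> f)" for n
    proof (induction n)
      case 0
      then show ?case using p0 by simp
    next
      case (Suc n)
      let ?q = "p0 + real n *\<^sub>R w"
      have eq: "p0 + real (Suc n) *\<^sub>R w = ?q + w" by (simp add: algebra_simps)
      have "?q + w \<le> f" if "f \<in> Phi" for f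
        using w(3) that Suc by (fastforce simp: le_diff_eq add.commute)
      moreover have "?q + w \<in> E" using Suc w(1) by (simp add: sublattice_add[OF S])
      ultimately show ?case unfolding eq by blast
    qed
    have "real n *\<^sub>R w \<le> phi0 - p0" for n
      using lower[of n] Phi(2) by (simp add: le_diff_eq add.commute)
    then have "w = 0" using arch w(2) unfolding archimedean_vl_def by blast
    then show "z \<le> 0" unfolding w_def by (metis sup_ge1)
  qed
  then show ?thesis unfolding is_inf_in_def using sublattice_zero[OF S] by auto
qed

lemma regular_sublattice_lower_bound_le:
  fixes E :: "'a::{ordered_real_vector,lattice} set"
  assumes arch: "archimedean_vl TYPE('a)" and R: "regular_sublattice E"
    and Phi: "Phi \<subseteq> E" "phi0 \<in> Phi" and p0: "p0 \<in> E" "\<forall>f\<in>Phi. p0 \<le> f"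
    and y: "\<forall>f\<in>Phi. y \<le> f" and v: "\<forall>p\<in>E. (\<forall>f\<in>Phi. p \<le> f) \<longrightarrow> p \<le> v"
  shows "y \<le> v"
proof -
  let ?D = "{f - p | f p. f \<in> Phi \<and> p \<in> E \<and> (\<forall>f'\<in>Phi. p \<le> f')}"
  have S: "sublattice E" using R unfolding regular_sublattice_def by blast
  have "?D \<subseteq> E" using Phi(1) sublattice_diff[OF S] by blast
  then have "is_inf_in UNIV ?D 0"
    using R archimedean_is_inf_in_gaps_to_lower_bounds[OF arch S Phi p0]
    unfolding regular_sublattice_def by blast
  moreover have "y - v \<le> d" if "d \<in> ?D" for d
    using that y v by (auto intro: diff_mono)
  ultimately have "y - v \<le> 0" by (rule is_inf_in_UNIV_le)
  then show ?thesis by simp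
qed

section \<open>Elements approximable by a sublattice\<close>

definition is_sup_of_below :: "'a::order set \<Rightarrow> 'a \<Rightarrow> bool" where
  "is_sup_of_below E y \<longleftrightarrow> (\<forall>u. (\<forall>e\<in>E. e \<le> y \<longrightarrow> e \<le> u) \<longrightarrow> y \<le> u)"

definition is_inf_of_above :: "'a::order set \<Rightarrow> 'a \<Rightarrow> bool" where
  "is_inf_of_above E y \<longleftrightarrow> (\<forall>u. (\<forall>e\<in>E. y \<le> e \<longrightarrow> u \<le> e) \<longrightarrow> u \<le> y)"

definition approximable :: "'a::lattice set \<Rightarrow> 'a set" where
  "approximable E = {x. \<forall>a\<in>E. is_sup_of_below E (sup x a) \<and> is_inf_of_above E (inf x a)}"

lemma is_inf_of_above_iff_is_sup_of_below_uminus: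
  fixes E :: "'a::{ordered_real_vector,lattice} set"
  assumes S: "sublattice E"
  shows "is_inf_of_above E y \<longleftrightarrow> is_sup_of_below E (- y)"
proof -
  have bounds: "(\<forall>e\<in>E. y \<le> e \<longrightarrow> u \<le> e) \<longleftrightarrow> (\<forall>e\<in>E. e \<le> - y \<longrightarrow> e \<le> - u)" for u
  proof
    assume h: "\<forall>e\<in>E. y \<le> e \<longrightarrow> u \<le> e"
    show "\<forall>e\<in>E. e \<le> - y \<longrightarrow> e \<le> - u"
    proof (intro ballI impI)
      fix e assume "e \<in> E" "e \<le> - y"
      then have "u \<le> - e" using h sublattice_uminus[OF S] le_minus_iff by blast
      then show "e \<le> - u" by (simp add: le_minus_iff)
    qed
  next
    assume h: "\<forall>e\<in>E. e \<le> - y \<longrightarrow> e \<le> - u"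
    show "\<forall>e\<in>E. y \<le> e \<longrightarrow> u \<le> e"
    proof (intro ballI impI)
      fix e assume "e \<in> E" "y \<le> e"
      then have "- e \<le> - u" using h sublattice_uminus[OF S] neg_le_iff_le by blast
      then show "u \<le> e" by simp
    qed
  qed
  have "is_sup_of_below E (- y) \<longleftrightarrow> (\<forall>u. (\<forall>e\<in>E. e \<le> - y \<longrightarrow> e \<le> - u) \<longrightarrow> - y \<le> - u)"
    unfolding is_sup_of_below_def by (metis minus_minus)
  then show ?thesis unfolding is_inf_of_above_def bounds by simp
qed

lemma uminus_approximable:
  assumes S: "sublattice E" and x: "x \<in> approximable E"
  shows "- x \<in> approximable E"
  unfolding approximable_def
proof (intro CollectI ballI conjI)
  fix a assume a: "a \<in> E"
  have "is_inf_of_above E (inf x (- a))" "is_sup_of_below E (sup x (- a))"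
    using x sublattice_uminus[OF S a] unfolding approximable_def by blast+
  then show "is_sup_of_below E (sup (- x) a)" "is_inf_of_above E (inf (- x) a)"
    using is_inf_of_above_iff_is_sup_of_below_uminus[OF S, of "inf x (- a)"]
      is_inf_of_above_iff_is_sup_of_below_uminus[OF S, of "inf (- x) a"]
    by (simp_all add: vl.neg_inf_eq_sup)
qed

lemma sublattice_subset_approximable: "sublattice E \<Longrightarrow> E \<subseteq> approximable E"
  unfolding approximable_def is_sup_of_below_def is_inf_of_above_def
  using sublattice_sup sublattice_inf by blast

lemma is_inf_of_above_sup_le:
  fixes c :: "'a::{ordered_real_vector,lattice}"
  assumes c: "is_inf_of_above E c" and p: "\<And>f. f \<in> E \<Longrightarrow> c \<le> f \<Longrightarrow> p \<le> sup f a"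
  shows "p \<le> sup c a"
proof -
  have "p + inf c a - a \<le> f" if f: "f \<in> E" "c \<le> f" for f
  proof -
    have "p + inf c a \<le> sup f a + inf f a"
      using p[OF f] f(2) by (intro add_mono) (auto intro: le_infI1)
    also have "\<dots> = f + a" by (rule vl.add_eq_inf_sup[symmetric])
    finally show ?thesis by (simp add: diff_le_eq)
  qed
  then have "p + inf c a - a \<le> c" using c unfolding is_inf_of_above_def by blast
  then have "p + inf c a \<le> c + a" by (simp add: diff_le_eq)
  also have "\<dots> = sup c a + inf c a" by (rule vl.add_eq_inf_sup)
  finally show ?thesis by simp
qed

lemma is_sup_of_below_inf_le:
  fixes s :: "'a::{ordered_real_vector,lattice}"
  assumes s: "is_sup_of_below E s" and M: "\<And>l. l \<in> E \<Longrightarrow> l \<le> s \<Longrightarrow> inf w l \<le> M"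
  shows "inf w s \<le> M"
proof -
  have "l \<le> sup w s + M - w" if l: "l \<in> E" "l \<le> s" for l
  proof -
    have "l + w = sup l w + inf l w" by (rule vl.add_eq_inf_sup)
    also have "\<dots> \<le> sup w s + M"
      using M[OF l] l(2) by (intro add_mono) (simp_all add: inf.commute le_supI2)
    finally show ?thesis by (simp add: le_diff_eq)
  qed
  then have "s \<le> sup w s + M - w" using s unfolding is_sup_of_below_def by blast
  then have "s + w \<le> sup w s + M" by (simp add: le_diff_eq)
  then have "sup s w + inf s w \<le> sup w s + M" unfolding vl.add_eq_inf_sup[of s w] .
  then show ?thesis by (simp add: sup.commute inf.commute)
qed

lemma le_sup_if_approximable_approach:
  fixes x :: "'a::{ordered_real_vector,lattice}"
  assumes G: "is_inf_in UNIV G 0" and T: "T \<subseteq> approximable E"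
    and approach: "\<And>g. g \<in> G \<Longrightarrow> \<exists>z\<in>T. z \<le> x + g"
    and b: "b \<in> E" and p: "\<And>z f. z \<in> T \<Longrightarrow> f \<in> E \<Longrightarrow> inf z b \<le> f \<Longrightarrow> p \<le> sup f a"
  shows "p \<le> sup x a"
proof -
  have "p - sup x a \<le> g" if g: "g \<in> G" for g
  proof -
    obtain z where z: "z \<in> T" "z \<le> x + g" using approach[OF g] by blast
    have "0 \<le> g" using G g unfolding is_inf_in_def by blast
    have "is_inf_of_above E (inf z b)" using T z(1) b unfolding approximable_def by blast
    then have "p \<le> sup (inf z b) a" using p[OF z(1)] by (rule is_inf_of_above_sup_le)
    also have "\<dots> \<le> sup (x + g) (a + g)"
      using z(2) \<open>0 \<le> g\<close> by (intro sup_mono) (auto intro: le_infI1)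
    also have "\<dots> = sup x a + g" by (rule vl.add_sup_distrib_right[symmetric])
    finally show ?thesis by (simp only: diff_le_eq add.commute)
  qed
  then have "p - sup x a \<le> 0" by (rule is_inf_in_UNIV_le[OF G])
  then show ?thesis by (simp only: diff_le_0_iff_le)
qed

text \<open>Here \<open>T\<close> plays the role of a tail of a net of approximable elements order converging to \<open>x\<close>,
  and \<open>w\<close> that of \<open>x - g\<close>.\<close>

lemma approximable_lower_bound_inf_le:
  fixes x :: "'a::{ordered_real_vector,lattice}"
  assumes arch: "archimedean_vl TYPE('a)" and R: "regular_sublattice E" and a: "a \<in> E"
    and G: "is_inf_in UNIV G 0" and T: "T \<subseteq> approximable E" "z0 \<in> T"
    and w: "\<And>z. z \<in> T \<Longrightarrow> w \<le> z" and approach: "\<And>g. g \<in> G \<Longrightarrow> \<exists>z\<in>T. z \<le> x + g"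
    and u: "\<And>e. e \<in> E \<Longrightarrow> e \<le> sup x a \<Longrightarrow> e \<le> u"
    and l: "l \<in> E"
  shows "inf w l \<le> u"
proof -
  have S: "sublattice E" using R unfolding regular_sublattice_def by blast
  define b where "b = sup l a"
  have b: "b \<in> E" unfolding b_def using l a by (rule sublattice_sup[OF S])
  define Phi where "Phi = {sup f a | f. f \<in> E \<and> (\<exists>z\<in>T. inf z b \<le> f)}"
  have Phi_le: "sup (inf w b) a \<le> u"
  proof (rule regular_sublattice_lower_bound_le[OF arch R])
    show "Phi \<subseteq> E" unfolding Phi_def using a sublattice_sup[OF S] by blast
    show "sup b a \<in> Phi" unfolding Phi_def using T(2) b inf_le2[of z0 b] by blast
    show "a \<in> E" by (rule a)
    show "\<forall>f\<in>Phi. a \<le> f" unfolding Phi_def by clarsimp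
    show "\<forall>f\<in>Phi. sup (inf w b) a \<le> f"
    proof
      fix f assume "f \<in> Phi"
      then obtain f' z where f: "f = sup f' a" "z \<in> T" "inf z b \<le> f'" unfolding Phi_def by blast
      have "inf w b \<le> inf z b" using w[OF f(2)] by (rule inf_mono) simp
      then have "inf w b \<le> f'" using f(3) by (rule order_trans)
      then show "sup (inf w b) a \<le> f" unfolding f(1) by (rule sup_mono) simp
    qed
    show "\<forall>p\<in>E. (\<forall>f\<in>Phi. p \<le> f) \<longrightarrow> p \<le> u"
    proof (intro ballI impI)
      fix p assume p: "p \<in> E" "\<forall>f\<in>Phi. p \<le> f"
      have "p \<le> sup x a"
      proof (rule le_sup_if_approximable_approach[OF G T(1) approach b])
        fix z f assume "z \<in> T" "f \<in> E" "inf z b \<le> f"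
        then have "sup f a \<in> Phi" unfolding Phi_def by blast
        then show "p \<le> sup f a" using p(2) by blast
      qed
      then show "p \<le> u" using u p(1) by blast
    qed
  qed
  have "inf w l \<le> sup (inf w b) a" unfolding b_def by (intro le_supI1 inf_mono) simp_all
  then show ?thesis using Phi_le by (rule order_trans)
qed

lemma approximable_lower_bound_le:
  fixes x :: "'a::{ordered_real_vector,lattice}"
  assumes arch: "archimedean_vl TYPE('a)" and R: "regular_sublattice E" and a: "a \<in> E"
    and G: "is_inf_in UNIV G 0" and T: "T \<subseteq> approximable E" "z0 \<in> T"
    and w: "\<And>z. z \<in> T \<Longrightarrow> w \<le> z" and approach: "\<And>g. g \<in> G \<Longrightarrow> \<exists>z\<in>T. z \<le> x + g"
    and u: "\<And>e. e \<in> E \<Longrightarrow> e \<le> sup x a \<Longrightarrow> e \<le> u"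
  shows "w \<le> u"
proof -
  have "is_sup_of_below E (sup z0 a)" using T a unfolding approximable_def by blast
  then have "inf w (sup z0 a) \<le> u"
    using approximable_lower_bound_inf_le[OF arch R a G T w approach u] by (rule is_sup_of_below_inf_le)
  moreover have "inf w (sup z0 a) = w" using w[OF T(2)] by (simp add: inf_absorb1 le_supI1)
  ultimately show ?thesis by simp
qed

lemma is_sup_of_below_sup_order_limit:
  fixes x :: "'a::{ordered_real_vector,lattice}"
  assumes arch: "archimedean_vl TYPE('a)" and R: "regular_sublattice E"
    and x: "x \<in> adherence order_conv (approximable E)" and a: "a \<in> E"
  shows "is_sup_of_below E (sup x a)"
  unfolding is_sup_of_below_def
proof (intro allI impI)
  obtain F where F: "F \<noteq> bot" "eventually (\<lambda>z. z \<in> approximable E) F" "order_conv F x"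
    using x unfolding adherence_def by blast
  obtain G where G: "is_inf_in UNIV G 0"
    and ev: "\<And>g. g \<in> G \<Longrightarrow> eventually (\<lambda>z. x - g \<le> z \<and> z \<le> x + g) F"
    using F(3) unfolding order_conv_def by blast
  fix u assume u: "\<forall>e\<in>E. e \<le> sup x a \<longrightarrow> e \<le> u"
  have "sup x a - u \<le> g" if g: "g \<in> G" for g
  proof -
    let ?T = "{z \<in> approximable E. x - g \<le> z}"
    have T: "eventually (\<lambda>z. z \<in> ?T) F" using F(2) ev[OF g] by eventually_elim simp
    then obtain z0 where "z0 \<in> ?T" using eventually_happens'[OF F(1)] by blast
    have "x - g \<le> u"
    proof (rule approximable_lower_bound_le[OF arch R a G _ \<open>z0 \<in> ?T\<close>])
      show "\<exists>z\<in>?T. z \<le> x + g'" if "g' \<in> G" for g'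
      proof -
        have "eventually (\<lambda>z. z \<in> ?T \<and> z \<le> x + g') F"
          using T ev[OF that] by eventually_elim simp
        then show ?thesis using eventually_happens'[OF F(1)] by blast
      qed
    qed (use u in auto)
    moreover have "a - g \<le> a" using G g unfolding is_inf_in_def by simp
    then have "a - g \<le> u" using u a by (meson order_trans sup_ge2)
    ultimately have "sup (x - g) (a - g) \<le> u" by (rule sup_least)
    moreover have "sup (x - g) (a - g) = sup x a - g"
      using vl.add_sup_distrib_right[of x a "- g"] by (simp only: diff_conv_add_uminus)
    ultimately have "sup x a - g \<le> u" by simp
    then show ?thesis by (simp only: diff_le_eq add.commute)
  qed
  then have "sup x a - u \<le> 0" by (rule is_inf_in_UNIV_le[OF G])
  then show "sup x a \<le> u" by (simp only: diff_le_0_iff_le)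
qed

lemma approximable_order_closed:
  fixes E :: "'a::{ordered_real_vector,lattice} set"
  assumes arch: "archimedean_vl TYPE('a)" and R: "regular_sublattice E"
  shows "conv_closed order_conv (approximable E)"
proof (rule conv_closedI[where eta=order_conv, OF order_conv_principal subsetI])
  have S: "sublattice E" using R unfolding regular_sublattice_def by blast
  fix x assume x: "x \<in> adherence order_conv (approximable E)"
  have "uminus ` adherence order_conv (approximable E) \<subseteq> adherence order_conv (uminus ` approximable E)"
    using order_conv_vabs_lipschitz[OF vabs_lipschitz_uminus] by (rule adherence_image_subset)
  also have "\<dots> \<subseteq> adherence order_conv (approximable E)"
    using uminus_approximable[OF S] by (intro adherence_mono) blast
  finally have minus_x: "- x \<in> adherence order_conv (approximable E)" using x by blast
  show "x \<in> approximable E"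
    unfolding approximable_def
  proof (intro CollectI ballI conjI)
    fix a assume a: "a \<in> E"
    show "is_sup_of_below E (sup x a)" by (rule is_sup_of_below_sup_order_limit[OF arch R x a])
    have "is_sup_of_below E (sup (- x) (- a))"
      by (rule is_sup_of_below_sup_order_limit[OF arch R minus_x sublattice_uminus[OF S a]])
    then show "is_inf_of_above E (inf x a)"
      using is_inf_of_above_iff_is_sup_of_below_uminus[OF S] by (simp add: vl.neg_inf_eq_sup)
  qed
qed

lemma order_dense_in_approximable:
  assumes S: "sublattice E"
  shows "order_dense_in E (approximable E)"
  unfolding order_dense_in_def
proof (intro ballI impI)
  fix x assume x: "x \<in> approximable E" and pos: "0 < x"
  have "is_sup_of_below E (sup x 0)" using x sublattice_zero[OF S] unfolding approximable_def by blast
  then have "is_sup_of_below E x" using pos by (simp add: sup_absorb1)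
  moreover have "\<not> x \<le> 0" using pos by simp
  ultimately obtain l where l: "l \<in> E" "l \<le> x" "\<not> l \<le> 0" unfolding is_sup_of_below_def by blast
  have "sup l 0 \<in> E" using l(1) sublattice_zero[OF S] by (rule sublattice_sup[OF S])
  moreover have "0 < sup l 0" using l(3) by (simp add: less_le) (metis sup_ge1)
  moreover have "sup l 0 \<le> x" using l(2) pos by simp
  ultimately show "\<exists>e\<in>E. 0 < e \<and> e \<le> x" by blast
qed

text \<open>Each \<open>g \<sqinter> a\<close> is the infimum of the elements of \<open>E\<close> above it, so a lower bound \<open>y \<in> E\<close> of
  these elements yields the lower bound \<open>y \<squnion> 0 \<in> K\<close> of \<open>G\<close>.\<close>

lemma is_inf_in_elements_above_inf:
  fixes E K :: "'a::{ordered_real_vector,lattice} set"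
  assumes S: "sublattice E" and K: "E \<subseteq> K" "K \<subseteq> approximable E"
    and G: "G \<subseteq> K" "is_inf_in K G 0" and a: "a \<in> E" "0 \<le> a"
  shows "is_inf_in E {f \<in> E. \<exists>g\<in>G. inf g a \<le> f} 0"
  unfolding is_inf_in_def
proof (intro conjI ballI allI impI)
  let ?Phi = "{f \<in> E. \<exists>g\<in>G. inf g a \<le> f}"
  have G_nonneg: "\<forall>g\<in>G. 0 \<le> g" using G(2) unfolding is_inf_in_def by blast
  show "0 \<in> E" by (rule sublattice_zero[OF S])
  show "0 \<le> f" if f: "f \<in> ?Phi" for f
  proof -
    obtain g where g: "g \<in> G" "inf g a \<le> f" using f by blast
    have "0 \<le> inf g a" using G_nonneg g(1) a(2) by simp
    then show ?thesis using g(2) by (rule order_trans)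
  qed
  fix y assume y: "y \<in> E" "\<forall>f\<in>?Phi. y \<le> f"
  have "y \<le> g" if g: "g \<in> G" for g
  proof -
    have "is_inf_of_above E (inf g a)" using g G(1) K(2) a(1) unfolding approximable_def by blast
    moreover have "\<forall>e\<in>E. inf g a \<le> e \<longrightarrow> y \<le> e" using y g by blast
    ultimately have "y \<le> inf g a" unfolding is_inf_of_above_def by blast
    then show ?thesis by simp
  qed
  then have "\<forall>g\<in>G. sup y 0 \<le> g" using G_nonneg by (simp add: le_sup_iff)
  moreover have "sup y 0 \<in> K" using K(1) sublattice_sup[OF S y(1) sublattice_zero[OF S]] by blast
  ultimately have "sup y 0 \<le> 0" using G(2) unfolding is_inf_in_def by blast
  then show "y \<le> 0" by simp
qed

lemma lower_bound_inf_eq_zero: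
  fixes E K :: "'a::{ordered_real_vector,lattice} set"
  assumes R: "regular_sublattice E" and K: "E \<subseteq> K" "K \<subseteq> approximable E"
    and G: "G \<subseteq> K" "is_inf_in K G 0"
    and w: "0 \<le> w" "\<forall>g\<in>G. w \<le> g" and a: "a \<in> E" "0 \<le> a"
  shows "inf w a = 0"
proof -
  let ?Phi = "{f \<in> E. \<exists>g\<in>G. inf g a \<le> f}"
  have S: "sublattice E" using R unfolding regular_sublattice_def by blast
  have "?Phi \<subseteq> E" by blast
  moreover note is_inf_in_elements_above_inf[OF S K G a]
  ultimately have inf_Phi: "is_inf_in UNIV ?Phi 0" using R unfolding regular_sublattice_def by blast
  have "inf w a \<le> 0"
  proof (rule is_inf_in_UNIV_le[OF inf_Phi])
    fix f assume "f \<in> ?Phi"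
    then obtain g where g: "g \<in> G" "inf g a \<le> f" by blast
    have "inf w a \<le> inf g a" using w(2) g(1) by (intro inf_mono) simp_all
    then show "inf w a \<le> f" using g(2) by (rule order_trans)
  qed
  moreover have "0 \<le> inf w a" using w(1) a(2) by simp
  ultimately show ?thesis by (rule antisym)
qed

lemma regular_sublattice_between:
  fixes E K :: "'a::{ordered_real_vector,lattice} set"
  assumes R: "regular_sublattice E" and K: "sublattice K" "E \<subseteq> K" "K \<subseteq> approximable E"
  shows "regular_sublattice K"
  unfolding regular_sublattice_def
proof (intro conjI allI impI)
  show "sublattice K" by (rule K(1))
  have S: "sublattice E" using R unfolding regular_sublattice_def by blast
  fix G assume G: "G \<subseteq> K" "is_inf_in K G 0"
  have "z \<le> 0" if z: "\<forall>g\<in>G. z \<le> g" for z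
  proof (cases "G = {}")
    case True
    then have "is_inf_in E G 0" using G(2) K(2) sublattice_zero[OF S] unfolding is_inf_in_def by auto
    then have "is_inf_in UNIV G 0" using R True unfolding regular_sublattice_def by blast
    then show ?thesis using z by (intro is_inf_in_UNIV_le) blast+
  next
    case False
    then obtain g where g: "g \<in> G" by blast
    define w where "w = sup z 0"
    have w: "0 \<le> w" "\<forall>g\<in>G. w \<le> g" using z G(2) unfolding w_def is_inf_in_def by auto
    have "0 \<le> g" using g G(2) unfolding is_inf_in_def by blast
    have "is_sup_of_below E (sup g 0)"
      using g G(1) K(3) sublattice_zero[OF S] unfolding approximable_def by blast
    then have "is_sup_of_below E g" using \<open>0 \<le> g\<close> by (simp add: sup_absorb1)
    moreover have "l \<le> g - w" if l: "l \<in> E" "l \<le> g" for l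
    proof -
      have "sup l 0 \<in> E" using sublattice_sup[OF S l(1) sublattice_zero[OF S]] .
      then have "inf w (sup l 0) = 0" by (rule lower_bound_inf_eq_zero[OF R K(2,3) G w]) (rule sup_ge2)
      then have "sup l 0 + w = sup (sup l 0) w"
        using vl.add_eq_inf_sup[of "sup l 0" w] by (simp add: inf.commute)
      also have "\<dots> \<le> g" using l(2) \<open>0 \<le> g\<close> w(2) g by simp
      finally have "l + w \<le> g" by (rule order_trans[rotated]) (simp add: add_right_mono)
      then show ?thesis by (simp add: le_diff_eq)
    qed
    ultimately have "g \<le> g - w" unfolding is_sup_of_below_def by blast
    then have "w \<le> 0" by simp
    then show "z \<le> 0" unfolding w_def by simp
  qed
  then show "is_inf_in UNIV G 0" using G(2) unfolding is_inf_in_def by auto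
qed

lemma sturdy_conv_closure_subset_order_closure:
  assumes L: "locally_solid_additive eta" and St: "sturdy eta"
    and O: "regular_sublattice (conv_closure order_conv E)"
  shows "conv_closure eta E \<subseteq> conv_closure order_conv E"
proof (rule conv_closure_minimal[OF conv_closedI subset_conv_closure])
  show "eta (principal {x}) x" for x using L by (rule locally_solid_additive_principal)
  have "adherence eta (conv_closure order_conv E) \<subseteq> conv_closure order_conv (conv_closure order_conv E)"
    using St O unfolding sturdy_def by blast
  also have "\<dots> \<subseteq> conv_closure order_conv E"
    by (rule conv_closure_minimal[OF conv_closed_conv_closure[where eta=order_conv,
          OF order_conv_principal] order_refl])
  finally show "adherence eta (conv_closure order_conv E) \<subseteq> conv_closure order_conv E" .
qed

theorem corollary9p5:
  fixes eta :: "'a::{ordered_real_vector,lattice} filter \<Rightarrow> 'a \<Rightarrow> bool"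
    and E :: "'a set"
  assumes "archimedean_vl TYPE('a)"
    and "locally_solid_additive eta"
    and "sturdy eta"
    and "regular_sublattice E"
  shows "order_dense_in E (conv_closure eta E) \<and> regular_sublattice (conv_closure eta E)"
proof -
  note arch = assms(1) and L = assms(2) and St = assms(3) and R = assms(4)
  have S: "sublattice E" using R unfolding regular_sublattice_def by blast
  have O_approximable: "conv_closure order_conv E \<subseteq> approximable E"
    by (rule conv_closure_minimal[OF approximable_order_closed[OF arch R]
          sublattice_subset_approximable[OF S]])
  have "regular_sublattice (conv_closure order_conv E)"
    by (rule regular_sublattice_between[OF R sublattice_conv_closure[OF lipschitz_continuous_order_conv S]
          subset_conv_closure O_approximable])
  then have C_approximable: "conv_closure eta E \<subseteq> approximable E"
    using sturdy_conv_closure_subset_order_closure[OF L St] O_approximable by blast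
  have "regular_sublattice (conv_closure eta E)"
    by (rule regular_sublattice_between[OF R
          sublattice_conv_closure[OF lipschitz_continuous_conv_if_locally_solid_additive[OF L] S]
          subset_conv_closure C_approximable])
  moreover have "order_dense_in E (conv_closure eta E)"
    using order_dense_in_approximable[OF S] C_approximable unfolding order_dense_in_def by blast
  ultimately show ?thesis by blast
qed

end
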